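(* Let $\mathbb{F}_q$ be a finite field of characteristic $p$, let $l$ be a prime number dividing an integer $m>l$, assume $p\mid n=lm$, and let $t=\#(D_{n,l}\cap D_{n,m}\cap D_n^+)$. Then: (1) If $p\nmid l$, then $t\le q^{m+\lceil l/p\rceil}(1-q^{-1})$. (2) If $p\mid l$, set $c=\lceil (m-l+1)/l\rceil$; then $t\le q^{m+l-c+\lceil c/p\rceil}(1-q^{-1})$, and if $l\mid m$ then $c=m/l$.
   Context: $g\circ h=g(h)$. A polynomial is decomposable if it equals $g\circ h$ with $\deg g,\deg h\ge2$; $D_n$ is the set of decomposable polynomials of degree $n$ in $\mathbb{F}_q[x]$ and $D_n^+=D_n\setminus\mathbb{F}_q[x^p]$. For a divisor $e$ of $n$, $D_{n,e}=\{g\circ h:\ \deg g=e,\ h\text{ monic},\ h(0)=0,\ \deg h=n/e\}$. *)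

theory Defs
  imports Complex_Main "HOL-Computational_Algebra.Polynomial"
begin

definition decomposable :: "'a::field poly \<Rightarrow> bool" where
  "decomposable f \<longleftrightarrow> (\<exists>g h. f = pcompose g h \<and> degree g \<ge> 2 \<and> degree h \<ge> 2)"

definition D :: "nat \<Rightarrow> 'a::field poly set" where
  "D n = {f. degree f = n \<and> decomposable f}"

definition poly_in_xp :: "nat \<Rightarrow> 'a::field poly \<Rightarrow> bool" where
  "poly_in_xp p f \<longleftrightarrow> (\<forall>i. coeff f i \<noteq> 0 \<longrightarrow> p dvd i)"

definition Dplus :: "nat \<Rightarrow> 'a::field poly set" where
  "Dplus n = {f \<in> D n. \<not> poly_in_xp CHAR('a) f}"

definition Dne :: "nat \<Rightarrow> nat \<Rightarrow> 'a::field poly set" where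
  "Dne n e = {pcompose g h | g h. degree g = e \<and> lead_coeff h = 1 \<and> coeff h 0 = 0 \<and> degree h = n div e}"

end

theory Submission
  imports Defs "HOL-Library.FuncSet"
begin

text \<open>
  Let f = g \<circ> h = g' \<circ> h' with deg g = l, deg g' = m and h, h' monic without constant term.
  Near its top degree a composition G \<circ> H agrees with lc(G) H^(deg G), which is a p-th power
  when p divides deg G; so the coefficients of f at high positions prime to p vanish.

  If p does not divide l, then p divides m and the coefficients of f at the positions lm - s
  (0 < s < l, p not dividing s) vanish. These are the coefficients of lc(g) h^l, and the
  coefficient of h^l at lm - s is l times the coefficient of h at m - s plus terms in higher
  coefficients of h. Hence h is determined by its remaining coefficients, while g is arbitrary.

  If p = l, the coefficients of f above lm - m at positions prime to l vanish. As f is not a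
  polynomial in x^p, h' = x^l + T with T \<noteq> 0 of degree e > 0, and the coefficient of g' \<circ> h'
  at l(i - 1) + e is i lc(T) times the coefficient of g' at i plus terms in higher coefficients
  of g'. Hence g' is determined by its coefficients away from the positions m - s
  (0 < s < m/l, l not dividing s), while h' ranges over at most q^(l-1) polynomials.

  Counting the integers in the respective ranges that are prime to p gives the exponents.
\<close>

section \<open>Coefficients of compositions and powers\<close>

lemma prime_CHAR_finite_field: "prime CHAR('a::{finite,field})"
  by (rule prime_CHAR_semidom) (simp add: finite_imp_CHAR_pos)

lemma coeff_mult_at_degree_bounds:
  fixes A B :: "'a::idom poly"
  assumes "degree A \<le> a" "degree B \<le> b"
  shows "coeff (A * B) (a + b) = coeff A a * coeff B b"
proof (cases "degree A = a \<and> degree B = b")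
  case True
  then show ?thesis using coeff_mult_degree_sum[of A B] by simp
next
  case False
  then have "coeff A a * coeff B b = 0"
    using assms by (auto simp: coeff_eq_0)
  moreover have "degree (A * B) < a + b"
    using degree_mult_le[of A B] False assms by linarith
  ultimately show ?thesis by (simp add: coeff_eq_0)
qed

lemma pcompose_monom: "pcompose (monom c n) h = smult c (h ^ n)"
  by (induction n) (auto simp: monom_Suc pcompose_pCons monom_0)

lemma coeff_pcompose_above:
  fixes g h :: "'a::idom poly"
  assumes "degree g \<le> M" "(M - 1) * degree h < i"
  shows "coeff (pcompose g h) i = coeff g M * coeff (h ^ M) i"
proof -
  define r where "r = g - monom (coeff g M) M"
  have "degree r \<le> M - 1"
    unfolding r_def using assms(1) by (intro degree_le) (auto simp: coeff_monom coeff_eq_0)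
  then have "degree (pcompose r h) < i"
    using assms(2) by (simp add: degree_pcompose) (meson le_less_trans mult_le_mono1)
  moreover have "pcompose g h = smult (coeff g M) (h ^ M) + pcompose r h"
    unfolding r_def by (simp add: pcompose_diff pcompose_monom)
  ultimately show ?thesis by (simp add: coeff_eq_0)
qed

lemma poly_in_xp_pcompose_monom:
  assumes "0 < p"
  shows "poly_in_xp p (pcompose g (monom 1 p))"
  unfolding poly_in_xp_def
proof (induction g)
  case (pCons a g)
  show ?case
  proof (intro allI impI)
    fix i assume "coeff (pcompose (pCons a g) (monom 1 p)) i \<noteq> 0"
    then have "i = 0 \<or> p \<le> i \<and> coeff (pcompose g (monom 1 p)) (i - p) \<noteq> 0"
      by (auto simp: pcompose_pCons coeff_pCons coeff_monom_mult split: nat.splits if_splits)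
    then show "p dvd i"
      using pCons.IH by (metis dvd_0_right dvd_add_left_iff dvd_refl le_add_diff_inverse2)
  qed
qed simp

lemma power_CHAR_eq_pcompose:
  fixes Q :: "'a::comm_ring_1 poly"
  assumes "prime CHAR('a)"
  shows "Q ^ CHAR('a) = pcompose (map_poly (\<lambda>c. c ^ CHAR('a)) Q) (monom 1 CHAR('a))"
proof (induction Q)
  case (pCons a Q)
  let ?p = "CHAR('a)"
  have "pCons a Q = [:a:] + monom 1 1 * Q"
    by (simp add: monom_Suc monom_0 pCons_one)
  then have "(pCons a Q) ^ ?p = [:a:] ^ ?p + (monom 1 1 * Q) ^ ?p"
    using assms by (simp add: freshmans_dream)
  also have "\<dots> = [:a ^ ?p:] + monom 1 ?p * Q ^ ?p"
    by (simp add: power_mult_distrib monom_power poly_const_pow)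
  finally show ?case
    using assms pCons.IH
    by (simp add: map_poly_pCons pcompose_pCons prime_gt_0_nat power_0_left)
qed (simp add: pcompose_0 assms prime_gt_0_nat power_0_left)

lemma poly_in_xp_power_CHAR:
  fixes Q :: "'a::field poly"
  assumes "prime CHAR('a)"
  shows "poly_in_xp CHAR('a) (Q ^ CHAR('a))"
  using power_CHAR_eq_pcompose[OF assms] poly_in_xp_pcompose_monom assms prime_gt_0_nat
  by metis

lemma coeff_pcompose_eq_0_if_CHAR_dvd_degree:
  fixes g h :: "'a::field poly"
  assumes "prime CHAR('a)" "CHAR('a) dvd degree g" "(degree g - 1) * degree h < i"
    and "\<not> CHAR('a) dvd i"
  shows "coeff (pcompose g h) i = 0"
proof -
  let ?p = "CHAR('a)"
  have "h ^ degree g = (h ^ (degree g div ?p)) ^ ?p"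
    using assms(2) by (simp flip: power_mult)
  then have "coeff (h ^ degree g) i = 0"
    using poly_in_xp_power_CHAR[OF assms(1)] assms(4) unfolding poly_in_xp_def by metis
  then show ?thesis
    using coeff_pcompose_above[of g "degree g" h i] assms(3) by simp
qed

lemma coeff_power_diff_monic:
  fixes A B :: "'a::idom poly"
  assumes "degree A = d" "degree B = d" "lead_coeff A = 1" "lead_coeff B = 1"
    and "degree (A - B) \<le> e"
  shows "degree (A ^ Suc N - B ^ Suc N) \<le> d * N + e
    \<and> coeff (A ^ Suc N - B ^ Suc N) (d * N + e) = of_nat (Suc N) * coeff (A - B) e"
proof (induction N)
  case (Suc N)
  have "B \<noteq> 0" using assms(4) by auto
  then have deg_BN: "degree (B ^ Suc N) = d * Suc N"
    using degree_power_eq[of B "Suc N"] assms(2) by (simp add: mult.commute)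
  have lead_BN: "coeff (B ^ Suc N) (d * Suc N) = 1"
    using lead_coeff_power[of B "Suc N"] assms(4) deg_BN by simp
  have split: "A ^ Suc (Suc N) - B ^ Suc (Suc N) = (A ^ Suc N - B ^ Suc N) * A + B ^ Suc N * (A - B)"
    by (simp add: algebra_simps)
  have idx: "d * Suc N + e = (d * N + e) + d"
    by simp
  have deg1: "degree ((A ^ Suc N - B ^ Suc N) * A) \<le> d * Suc N + e"
    using degree_mult_le[of "A ^ Suc N - B ^ Suc N" A] Suc.IH assms(1) by simp
  have deg2: "degree (B ^ Suc N * (A - B)) \<le> d * Suc N + e"
    using degree_mult_le[of "B ^ Suc N" "A - B"] deg_BN assms(5) by simp
  have coeff1: "coeff ((A ^ Suc N - B ^ Suc N) * A) (d * Suc N + e) = of_nat (Suc N) * coeff (A - B) e"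
    unfolding idx using coeff_mult_at_degree_bounds[of "A ^ Suc N - B ^ Suc N" "d * N + e" A d]
      Suc.IH assms(1,3) by simp
  have coeff2: "coeff (B ^ Suc N * (A - B)) (d * Suc N + e) = coeff (A - B) e"
    using coeff_mult_at_degree_bounds[of "B ^ Suc N" "d * Suc N" "A - B" e] deg_BN lead_BN assms(5)
    by simp
  show ?case
    unfolding split coeff_add coeff1 coeff2
    using degree_add_le[OF deg1 deg2] by (simp add: algebra_simps)
qed (use assms(5) in simp)

lemma degree_diff_monom_less:
  fixes h :: "'a::comm_ring_1 poly"
  assumes "degree h = l" "lead_coeff h = 1" "0 < l"
  shows "degree (h - monom 1 l) < l"
proof -
  have "degree (h - monom 1 l) \<le> l"
    using assms(1) by (intro degree_diff_le) (simp_all add: degree_monom_le)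
  moreover have "coeff (h - monom 1 l) l = 0"
    using assms(1,2) by simp
  ultimately show ?thesis
    using assms(3) by (metis leading_coeff_0_iff degree_0 order.not_eq_order_implies_strict)
qed

lemma degree_diff_monom_gt_0:
  fixes h :: "'a::comm_ring_1 poly"
  assumes "coeff h 0 = 0" "h \<noteq> monom 1 l" "0 < l"
  shows "0 < degree (h - monom 1 l)"
proof (rule ccontr)
  assume "\<not> 0 < degree (h - monom 1 l)"
  then obtain c where "h - monom 1 l = [:c:]"
    by (auto elim: degree_eq_zeroE)
  moreover have "coeff (h - monom 1 l) 0 = 0"
    using assms(1,3) by simp
  ultimately show False
    using assms(2) by simp
qed

lemma coeff_pcompose_near_monom:
  fixes g h :: "'a::idom poly"
  assumes "degree h = l" "lead_coeff h = 1" "0 < degree (h - monom 1 l)"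
    and "degree g \<le> i" "0 < i"
  shows "coeff (pcompose g h) (l * (i - 1) + degree (h - monom 1 l))
    = of_nat i * coeff g i * lead_coeff (h - monom 1 l)"
proof -
  define e where "e = degree (h - monom 1 l)"
  have "0 < l"
    using assms(1-3) by (cases l) (auto simp: monom_0 one_pCons elim!: degree_eq_zeroE)
  then have "e < l"
    unfolding e_def by (rule degree_diff_monom_less[OF assms(1,2)])
  have "Suc (i - 1) = i" using assms(5) by simp
  then have "coeff (h ^ i - monom 1 l ^ i) (l * (i - 1) + e) = of_nat i * coeff (h - monom 1 l) e"
    using coeff_power_diff_monic[where A = h and B = "monom 1 l" and d = l and e = e and N = "i - 1"]
      assms(1,2)
    by (simp add: degree_monom_eq e_def)
  moreover have "coeff (monom 1 l ^ i) (l * (i - 1) + e) = (0 :: 'a)"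
  proof -
    have "l * (i - 1) + e < l * i"
      using \<open>e < l\<close> assms(5) by (cases i) auto
    then show ?thesis by (simp add: monom_power coeff_monom)
  qed
  moreover have "(i - 1) * degree h < l * (i - 1) + e"
    using assms(1,3) unfolding e_def by (simp add: mult.commute)
  ultimately show ?thesis
    using coeff_pcompose_above[OF assms(4)] unfolding e_def by (simp add: mult.commute)
qed

section \<open>Polynomials determined by few coefficients\<close>

lemma poly_eqI_descending:
  assumes "\<And>i. (\<And>j. i < j \<Longrightarrow> coeff A j = coeff B j) \<Longrightarrow> coeff A i = coeff B i"
  shows "A = B"
proof (rule poly_eqI)
  define N where "N = max (degree A) (degree B)"
  show "coeff A i = coeff B i" for i
  proof (induction "N - i" arbitrary: i rule: less_induct)
    case less
    show ?case
    proof (rule assms)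
      fix j assume "i < j"
      show "coeff A j = coeff B j"
      proof (cases "j \<le> N")
        case True
        then show ?thesis using less \<open>i < j\<close> by simp
      qed (simp add: N_def coeff_eq_0)
    qed
  qed
qed

lemma monic_eq_if_power_coeffs_eq:
  fixes h1 h2 :: "'a::idom poly"
  assumes "degree h1 = m" "degree h2 = m" "lead_coeff h1 = 1" "lead_coeff h2 = 1"
    and "of_nat l \<noteq> (0 :: 'a)"
    and "\<And>i. i \<in> I \<Longrightarrow> coeff (h1 ^ l) (m * (l - 1) + i) = coeff (h2 ^ l) (m * (l - 1) + i)"
    and "\<And>i. i < m \<Longrightarrow> i \<notin> I \<Longrightarrow> coeff h1 i = coeff h2 i"
  shows "h1 = h2"
proof (rule poly_eqI_descending)
  fix i assume above: "\<And>j. i < j \<Longrightarrow> coeff h1 j = coeff h2 j"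
  consider "m \<le> i" | "i < m" "i \<notin> I" | "i \<in> I" "i < m"
    using not_le by blast
  then show "coeff h1 i = coeff h2 i"
  proof cases
    case 1
    then show ?thesis using assms(1-4) by (cases "i = m") (auto simp: coeff_eq_0)
  next
    case 2
    then show ?thesis using assms(7) by blast
  next
    case 3
    have "degree (h1 - h2) \<le> i"
      using above by (intro degree_le) simp
    then have "coeff (h1 ^ Suc (l - 1) - h2 ^ Suc (l - 1)) (m * (l - 1) + i)
        = of_nat (Suc (l - 1)) * coeff (h1 - h2) i"
      using coeff_power_diff_monic[OF assms(1-4)] by blast
    moreover have "Suc (l - 1) = l"
      using assms(5) by (cases l) auto
    ultimately have "of_nat l * coeff (h1 - h2) i = 0"
      using assms(6)[OF 3(1)] by simp
    then show ?thesis using assms(5) by simp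
  qed
qed

lemma outer_eq_if_pcompose_coeffs_eq:
  fixes g1 g2 h :: "'a::idom poly"
  assumes "degree h = l" "lead_coeff h = 1" "0 < degree (h - monom 1 l)"
    and "degree g1 = m" "degree g2 = m" "lead_coeff g1 = lead_coeff g2"
    and "\<And>i. i \<in> I \<Longrightarrow> of_nat i \<noteq> (0 :: 'a)"
    and "\<And>i. i \<in> I \<Longrightarrow> coeff (pcompose g1 h) (l * (i - 1) + degree (h - monom 1 l))
                          = coeff (pcompose g2 h) (l * (i - 1) + degree (h - monom 1 l))"
    and "\<And>i. i < m \<Longrightarrow> i \<notin> I \<Longrightarrow> coeff g1 i = coeff g2 i"
  shows "g1 = g2"
proof (rule poly_eqI_descending)
  fix i assume above: "\<And>j. i < j \<Longrightarrow> coeff g1 j = coeff g2 j"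
  consider "m \<le> i" | "i < m" "i \<notin> I" | "i \<in> I"
    using not_le by blast
  then show "coeff g1 i = coeff g2 i"
  proof cases
    case 1
    then show ?thesis using assms(4-6) by (cases "i = m") (auto simp: coeff_eq_0)
  next
    case 2
    then show ?thesis using assms(9) by blast
  next
    case 3
    have "0 < i" using assms(7)[OF 3] by (cases i) auto
    define a where "a = lead_coeff (h - monom 1 l)"
    have "degree (g1 - g2) \<le> i"
      using above by (intro degree_le) simp
    then have "coeff (pcompose (g1 - g2) h) (l * (i - 1) + degree (h - monom 1 l))
        = of_nat i * coeff (g1 - g2) i * a"
      unfolding a_def by (rule coeff_pcompose_near_monom[OF assms(1-3) _ \<open>0 < i\<close>])
    moreover have "coeff (pcompose (g1 - g2) h) (l * (i - 1) + degree (h - monom 1 l)) = 0"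
      using assms(8)[OF 3] by (simp add: pcompose_diff)
    moreover have "a \<noteq> 0"
      using assms(3) unfolding a_def by (metis degree_0 leading_coeff_0_iff less_irrefl)
    ultimately show ?thesis using assms(7)[OF 3] by simp
  qed
qed

lemma card_poly_restrict_coeff_le:
  fixes A :: "'a::{finite,zero} poly set"
  assumes "finite K" "inj_on (\<lambda>g. restrict (coeff g) K) A"
  shows "finite A" and "card A \<le> card (UNIV :: 'a set) ^ card K"
proof -
  let ?B = "PiE K (\<lambda>_. UNIV :: 'a set)"
  have sub: "(\<lambda>g. restrict (coeff g) K) ` A \<subseteq> ?B" by auto
  have fin: "finite ?B" using assms(1) by (intro finite_PiE) auto
  show "finite A" using inj_on_finite[OF assms(2) sub fin] .
  show "card A \<le> card (UNIV :: 'a set) ^ card K"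
    using card_inj_on_le[OF assms(2) sub fin] assms(1) by (simp add: card_PiE)
qed

lemma card_poly_lead_restrict_coeff_le:
  fixes A :: "'a::{finite,zero} poly set"
  assumes "finite K" "inj_on (\<lambda>g. (lead_coeff g, restrict (coeff g) K)) A" "0 \<notin> A"
  shows "finite A" and "card A \<le> (card (UNIV :: 'a set) - 1) * card (UNIV :: 'a set) ^ card K"
proof -
  let ?B = "(UNIV - {0 :: 'a}) \<times> PiE K (\<lambda>_. UNIV :: 'a set)"
  have sub: "(\<lambda>g. (lead_coeff g, restrict (coeff g) K)) ` A \<subseteq> ?B"
    using assms(3) by auto
  have fin: "finite ?B" using assms(1) by (intro finite_cartesian_product finite_PiE) auto
  show "finite A" using inj_on_finite[OF assms(2) sub fin] .
  show "card A \<le> (card (UNIV :: 'a set) - 1) * card (UNIV :: 'a set) ^ card K"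
    using card_inj_on_le[OF assms(2) sub fin] assms(1)
    by (simp add: card_cartesian_product card_PiE card_Diff_subset)
qed

lemma card_degree_eq_le:
  assumes "0 < d"
  shows "finite {g :: 'a::{finite,zero} poly. degree g = d}"
    and "card {g :: 'a::{finite,zero} poly. degree g = d} \<le> (card (UNIV :: 'a set) - 1) * card (UNIV :: 'a set) ^ d"
proof -
  have inj: "inj_on (\<lambda>g. (lead_coeff g, restrict (coeff g) {..<d})) {g :: 'a poly. degree g = d}"
  proof (rule inj_onI)
    fix g1 g2 :: "'a poly"
    assume deg: "g1 \<in> {g. degree g = d}" "g2 \<in> {g. degree g = d}"
      and eq: "(lead_coeff g1, restrict (coeff g1) {..<d}) = (lead_coeff g2, restrict (coeff g2) {..<d})"
    have low: "coeff g1 i = coeff g2 i" if "i < d" for i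
      using eq that by (metis lessThan_iff prod.inject restrict_apply')
    show "g1 = g2"
    proof (rule poly_eqI)
      show "coeff g1 i = coeff g2 i" for i
        using low[of i] eq deg by (cases "i < d"; cases "i = d") (auto simp: coeff_eq_0)
    qed
  qed
  have nonzero: "0 \<notin> {g :: 'a poly. degree g = d}"
    using assms by simp
  show "finite {g :: 'a poly. degree g = d}"
    using card_poly_lead_restrict_coeff_le(1)[OF finite_lessThan inj nonzero] .
  show "card {g :: 'a poly. degree g = d} \<le> (card (UNIV :: 'a set) - 1) * card (UNIV :: 'a set) ^ d"
    using card_poly_lead_restrict_coeff_le(2)[OF finite_lessThan inj nonzero] by simp
qed

lemma card_monic_coeff_0_le:
  shows "finite {h :: 'a::{finite,zero_neq_one} poly. degree h = l \<and> lead_coeff h = 1 \<and> coeff h 0 = 0}"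
    and "card {h :: 'a poly. degree h = l \<and> lead_coeff h = 1 \<and> coeff h 0 = 0} \<le> card (UNIV :: 'a set) ^ (l - 1)"
proof -
  let ?H = "{h :: 'a poly. degree h = l \<and> lead_coeff h = 1 \<and> coeff h 0 = 0}"
  have "inj_on (\<lambda>h. restrict (coeff h) {1..<l}) ?H"
  proof (rule inj_onI)
    fix h1 h2 assume h: "h1 \<in> ?H" "h2 \<in> ?H" "restrict (coeff h1) {1..<l} = restrict (coeff h2) {1..<l}"
    show "h1 = h2"
    proof (rule poly_eqI)
      show "coeff h1 i = coeff h2 i" for i
      proof (cases "i \<in> {1..<l}")
        case True
        then show ?thesis using h(3) by (metis restrict_apply')
      next
        case False
        then have "i = 0 \<or> i = l \<or> l < i" by auto
        then show ?thesis using h(1,2) by (auto simp: coeff_eq_0)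
      qed
    qed
  qed
  then show "finite ?H" "card ?H \<le> card (UNIV :: 'a set) ^ (l - 1)"
    using card_poly_restrict_coeff_le[of "{1..<l}" ?H] by simp_all
qed

section \<open>Elementary counting\<close>

lemma card_image_Sigma_le:
  assumes "finite A" "\<And>a. a \<in> A \<Longrightarrow> finite (B a)" "\<And>a. a \<in> A \<Longrightarrow> card (B a) \<le> N"
  shows "card (f ` Sigma A B) \<le> card A * N"
proof -
  have "card (f ` Sigma A B) \<le> card (Sigma A B)"
    using assms(1,2) by (intro card_image_le finite_SigmaI)
  also have "\<dots> = (\<Sum>a\<in>A. card (B a))"
    using assms(1,2) by simp
  also have "\<dots> \<le> card A * N"
    using sum_bounded_above[of A "\<lambda>a. card (B a)" N] assms(3) by simp
  finally show ?thesis .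
qed

lemma card_Diff_image_reflect:
  fixes m :: nat
  assumes "finite U" "E \<subseteq> {..m}" "(\<lambda>s. m - s) ` E \<subseteq> U"
  shows "card (U - (\<lambda>s. m - s) ` E) = card U - card E"
proof -
  have "inj_on (\<lambda>s. m - s) E"
  proof (rule inj_onI)
    fix x y assume "x \<in> E" "y \<in> E" "m - x = m - y"
    moreover from this have "x \<le> m" "y \<le> m" using assms(2) by auto
    ultimately show "x = y" by arith
  qed
  then show ?thesis
    using assms by (simp add: card_Diff_subset card_image finite_subset)
qed

lemma card_not_dvd_lower_bound:
  fixes p L :: nat
  assumes "0 < p"
  shows "L \<le> card {s \<in> {1..<L}. \<not> p dvd s} + nat \<lceil>real L / real p\<rceil>"
proof (cases "L = 0")
  case False
  have "{s \<in> {1..<L}. p dvd s} \<subseteq> (\<lambda>j. p * j) ` {1..(L - 1) div p}"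
  proof
    fix s assume "s \<in> {s \<in> {1..<L}. p dvd s}"
    then obtain j where s: "s = p * j" "1 \<le> s" "s \<le> L - 1" by auto
    then have "j \<le> (L - 1) div p"
      using div_le_mono[of s "L - 1" p] assms by simp
    moreover have "1 \<le> j" using s by (cases j) auto
    ultimately show "s \<in> (\<lambda>j. p * j) ` {1..(L - 1) div p}"
      using s(1) by auto
  qed
  then have "card {s \<in> {1..<L}. p dvd s} \<le> card ((\<lambda>j. p * j) ` {1..(L - 1) div p})"
    by (intro card_mono) auto
  also have "\<dots> \<le> (L - 1) div p"
    using card_image_le[of "{1..(L - 1) div p}" "\<lambda>j. p * j"] by simp
  finally have multiples: "card {s \<in> {1..<L}. p dvd s} \<le> (L - 1) div p" .
  have "{s \<in> {1..<L}. \<not> p dvd s} \<union> {s \<in> {1..<L}. p dvd s} = {1..<L}" by auto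
  then have "card {s \<in> {1..<L}. \<not> p dvd s} + card {s \<in> {1..<L}. p dvd s} = L - 1"
    by (subst card_Un_disjoint[symmetric]) auto
  moreover have "real ((L - 1) div p * p) < real L"
    using False div_times_less_eq_dividend[of "L - 1" p] by (simp only: of_nat_less_iff)
  then have "real ((L - 1) div p) < real L / real p"
    using assms by (simp add: pos_less_divide_eq)
  then have "(L - 1) div p < nat \<lceil>real L / real p\<rceil>"
    using le_of_int_ceiling[of "real L / real p"] by (simp add: zless_nat_eq_int_zless) linarith
  ultimately show ?thesis
    using multiples by linarith
qed simp

lemma reflected_index_bounds:
  fixes l m k s e :: nat
  assumes "m = l * k" "1 \<le> s" "s < k" "\<not> l dvd s" "0 < e" "e < l"
  shows "\<not> l dvd m - s" and "l * m - m < l * (m - s - 1) + e" and "\<not> l dvd l * (m - s - 1) + e"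
proof -
  have "k \<le> m" using assms(1,6) by simp
  show "\<not> l dvd m - s"
  proof
    assume "l dvd m - s"
    then have "l dvd m - (m - s)"
      using assms(1) by (simp add: dvd_diff_nat)
    then show False
      using assms(3,4) \<open>k \<le> m\<close> by simp
  qed
  have "l * (s + 1) \<le> m"
    using assms(1,3) by (simp only: mult_le_mono2 Suc_leI Suc_eq_plus1[symmetric])
  moreover have "(m - s - 1) + (s + 1) = m"
    using assms(2,3) \<open>k \<le> m\<close> by linarith
  then have "l * (m - s - 1) + l * (s + 1) = l * m"
    by (metis add_mult_distrib2)
  ultimately show "l * m - m < l * (m - s - 1) + e"
    using assms(5) by linarith
  show "\<not> l dvd l * (m - s - 1) + e"
    using assms(5,6) by (auto simp: dvd_add_right_iff dest: dvd_imp_le)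
qed

lemma ceiling_minus_div_eq:
  assumes "m = l * k" "0 < l" "0 < k"
  shows "\<lceil>real (m - l + 1) / real l\<rceil> = int k"
proof (rule ceiling_unique)
  have "real (m - l + 1) = real l * real k - real l + 1"
    using assms by (simp add: of_nat_diff)
  then show "real_of_int (int k) - 1 < real (m - l + 1) / real l"
    and "real (m - l + 1) / real l \<le> real_of_int (int k)"
    using assms(2) by (simp_all add: field_simps)
qed

lemma le_power_mult_one_minus_inverse:
  fixes N q a b :: nat
  assumes "N \<le> (q - 1) * q ^ a" "0 < q" "a < b"
  shows "real N \<le> real q ^ b * (1 - 1 / real q)"
proof -
  have "real N \<le> real ((q - 1) * q ^ a)"
    using assms(1) by (simp only: of_nat_le_iff)
  also have "\<dots> = (real q - 1) * real q ^ a"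
    using assms(2) by (simp add: of_nat_diff)
  also have "\<dots> \<le> (real q - 1) * real q ^ (b - 1)"
    using assms(2,3) by (intro mult_left_mono power_increasing) auto
  also have "\<dots> = real q ^ b * (1 - 1 / real q)"
    using assms(2,3) by (cases b) (auto simp: field_simps)
  finally show ?thesis .
qed

section \<open>Counting the intersections\<close>

lemma mem_Dne_mult:
  assumes "0 < e"
  shows "f \<in> Dne (e * d) e \<longleftrightarrow>
    (\<exists>g h. f = pcompose g h \<and> degree g = e \<and> lead_coeff h = 1 \<and> coeff h 0 = 0 \<and> degree h = d)"
  unfolding Dne_def using assms by auto

lemma finite_Dne:
  assumes "0 < e" "0 < n div e"
  shows "finite (Dne n e :: 'a::{finite,field} poly set)"
proof (rule finite_subset)
  show "Dne n e \<subseteq> (\<lambda>(g, h). pcompose g h) ` ({g :: 'a poly. degree g = e} \<times> {h. degree h = n div e})"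
    unfolding Dne_def by auto
  show "finite ((\<lambda>(g, h). pcompose g h) ` ({g :: 'a poly. degree g = e} \<times> {h. degree h = n div e}))"
    using card_degree_eq_le(1) assms by blast
qed

lemma coeff_power_inner_eq_0:
  fixes g h g' h' :: "'a::field poly"
  assumes "prime CHAR('a)" "pcompose g h = pcompose g' h'"
    and "degree g = l" "degree h = m" "degree g' = m" "degree h' = l"
    and "CHAR('a) dvd m" "l \<le> m" "s < l" "\<not> CHAR('a) dvd s"
  shows "coeff (h ^ l) (l * m - s) = 0"
proof -
  have "m \<le> l * m" "l \<le> l * m" using assms(8,9) by simp_all
  moreover have "(l - 1) * m = l * m - m" "(m - 1) * l = m * l - l" "m * l = l * m"
    by (simp_all add: diff_mult_distrib)
  ultimately have above_g: "(l - 1) * m < l * m - s" and above_g': "(m - 1) * l < l * m - s"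
    using assms(8,9) by linarith+
  have "\<not> CHAR('a) dvd l * m - s"
  proof
    assume "CHAR('a) dvd l * m - s"
    moreover have "CHAR('a) dvd l * m" using assms(7) by simp
    ultimately have "CHAR('a) dvd l * m - (l * m - s)" by (rule dvd_diff_nat[rotated])
    then show False using assms(10) \<open>m \<le> l * m\<close> assms(8,9) by simp
  qed
  then have "coeff (pcompose g' h') (l * m - s) = 0"
    using coeff_pcompose_eq_0_if_CHAR_dvd_degree[OF assms(1)] assms(5,6,7) above_g' by simp
  moreover have "coeff (pcompose g h) (l * m - s) = coeff g l * coeff (h ^ l) (l * m - s)"
    using coeff_pcompose_above[of g l h] assms(3,4) above_g by simp
  moreover have "coeff g l \<noteq> 0"
    using assms(3,9) by (auto simp flip: assms(3))
  ultimately show ?thesis using assms(2) by simp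
qed

lemma card_inner_components_le:
  fixes l m :: nat
  assumes "\<not> CHAR('a) dvd l" "l < m"
  defines "E \<equiv> {s \<in> {1..<l}. \<not> CHAR('a) dvd s}"
  defines "H \<equiv> {h :: 'a::{finite,field} poly. degree h = m \<and> lead_coeff h = 1 \<and> coeff h 0 = 0
      \<and> (\<forall>s\<in>E. coeff (h ^ l) (l * m - s) = 0)}"
  shows "finite H" and "card H \<le> card (UNIV :: 'a set) ^ (m - 1 - card E)"
proof -
  define I where "I = (\<lambda>s. m - s) ` E"
  define K where "K = {1..<m} - I"
  have "0 < l" using assms(1) by (cases l) auto
  have power_coeff: "coeff (h ^ l) (m * (l - 1) + i) = 0" if "h \<in> H" "i \<in> I" for h i
  proof -
    obtain s where s: "s \<in> E" "i = m - s" using \<open>i \<in> I\<close> unfolding I_def by blast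
    have "m * (l - 1) = l * m - m" "m \<le> l * m"
      using \<open>0 < l\<close> by (simp_all add: diff_mult_distrib2 mult.commute)
    then have "m * (l - 1) + i = l * m - s"
      using s assms(2) unfolding E_def by auto
    then show ?thesis using that(1) s(1) unfolding H_def by simp
  qed
  have "inj_on (\<lambda>h. restrict (coeff h) K) H"
  proof (rule inj_onI)
    fix h1 h2 assume h: "h1 \<in> H" "h2 \<in> H" "restrict (coeff h1) K = restrict (coeff h2) K"
    show "h1 = h2"
    proof (rule monic_eq_if_power_coeffs_eq[where I = I and l = l])
      show "of_nat l \<noteq> (0 :: 'a)"
        using assms(1) by (simp add: of_nat_eq_0_iff_char_dvd)
      show "coeff (h1 ^ l) (m * (l - 1) + i) = coeff (h2 ^ l) (m * (l - 1) + i)" if "i \<in> I" for i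
        using power_coeff h(1,2) that by simp
      show "coeff h1 i = coeff h2 i" if "i < m" "i \<notin> I" for i
      proof (cases "i = 0")
        case False
        then have "i \<in> K" using that unfolding K_def by simp
        then show ?thesis using h(3) by (metis restrict_apply')
      qed (use h(1,2) in \<open>simp add: H_def\<close>)
    qed (use h(1,2) in \<open>auto simp: H_def\<close>)
  qed
  moreover have "card K = m - 1 - card E"
  proof -
    have "E \<subseteq> {..m}" "(\<lambda>s. m - s) ` E \<subseteq> {1..<m}"
      using assms(2) unfolding E_def by auto
    then show ?thesis
      using card_Diff_image_reflect[of "{1..<m}" E m] unfolding K_def I_def by simp
  qed
  ultimately show "finite H" "card H \<le> card (UNIV :: 'a set) ^ (m - 1 - card E)"
    using card_poly_restrict_coeff_le[of K H] unfolding K_def by simp_all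
qed

lemma card_Dne_inter_le_CHAR_not_dvd:
  fixes l m :: nat
  assumes "\<not> CHAR('a) dvd l" "CHAR('a) dvd m" "l < m"
  shows "real (card (Dne (l * m) l \<inter> Dne (l * m) m :: 'a::{finite,field} poly set))
    \<le> real (card (UNIV :: 'a set)) ^ (m + nat \<lceil>real l / real CHAR('a)\<rceil>)
        * (1 - 1 / real (card (UNIV :: 'a set)))"
proof -
  let ?p = "CHAR('a)" and ?q = "card (UNIV :: 'a set)"
  let ?S = "Dne (l * m) l \<inter> Dne (l * m) m :: 'a poly set"
  define E where "E = {s \<in> {1..<l}. \<not> ?p dvd s}"
  define H where "H = {h :: 'a poly. degree h = m \<and> lead_coeff h = 1 \<and> coeff h 0 = 0
      \<and> (\<forall>s\<in>E. coeff (h ^ l) (l * m - s) = 0)}"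
  have "0 < l" using assms(1) by (cases l) auto
  then have "0 < m" using assms(3) by simp
  have decompositions: "?S \<subseteq> (\<lambda>(g, h). pcompose g h) ` Sigma {g. degree g = l} (\<lambda>_. H)"
  proof
    fix f :: "'a poly" assume "f \<in> ?S"
    then have "f \<in> Dne (l * m) l" "f \<in> Dne (m * l) m"
      by (simp_all add: mult.commute)
    then obtain g h g' h' where gh: "f = pcompose g h" "degree g = l" "lead_coeff h = 1"
        "coeff h 0 = 0" "degree h = m"
      and gh': "f = pcompose g' h'" "degree g' = m" "degree h' = l"
      unfolding mem_Dne_mult[OF \<open>0 < l\<close>] mem_Dne_mult[OF \<open>0 < m\<close>] by blast
    have "coeff (h ^ l) (l * m - s) = 0" if "s \<in> E" for s
      using coeff_power_inner_eq_0[OF prime_CHAR_finite_field _ gh(2,5) gh'(2,3) assms(2)]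
        gh(1) gh'(1) that assms(3) unfolding E_def by simp
    then show "f \<in> (\<lambda>(g, h). pcompose g h) ` Sigma {g. degree g = l} (\<lambda>_. H)"
      using gh unfolding H_def by force
  qed
  have "finite H" "card H \<le> ?q ^ (m - 1 - card E)"
    using card_inner_components_le[OF assms(1,3)] unfolding H_def E_def by simp_all
  moreover note card_degree_eq_le[OF \<open>0 < l\<close>, where 'a = 'a]
  ultimately have "card ?S \<le> card ((\<lambda>(g, h). pcompose g h) ` Sigma {g :: 'a poly. degree g = l} (\<lambda>_. H))"
    using decompositions by (intro card_mono finite_imageI finite_SigmaI)
  also have "\<dots> \<le> card {g :: 'a poly. degree g = l} * ?q ^ (m - 1 - card E)"
    using \<open>finite H\<close> \<open>card H \<le> ?q ^ (m - 1 - card E)\<close> card_degree_eq_le(1)[OF \<open>0 < l\<close>]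
    by (intro card_image_Sigma_le)
  also have "\<dots> \<le> (?q - 1) * ?q ^ l * ?q ^ (m - 1 - card E)"
    using card_degree_eq_le(2)[OF \<open>0 < l\<close>, where 'a = 'a] by simp
  also have "\<dots> = (?q - 1) * ?q ^ (l + (m - 1 - card E))"
    by (simp add: power_add)
  finally have card_le: "card ?S \<le> (?q - 1) * ?q ^ (l + (m - 1 - card E))" .
  have "0 < ?p"
    by (simp add: prime_gt_0_nat prime_CHAR_finite_field)
  then have "l \<le> card E + nat \<lceil>real l / real ?p\<rceil>"
    unfolding E_def by (rule card_not_dvd_lower_bound)
  then have "l + (m - 1 - card E) < m + nat \<lceil>real l / real ?p\<rceil>"
    using assms(3) by linarith
  then show ?thesis
    using le_power_mult_one_minus_inverse[OF card_le finite_UNIV_card_ge_0] by simp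
qed

lemma card_outer_components_le:
  fixes h :: "'a::{finite,field} poly" and l m k :: nat
  assumes "CHAR('a) = l" "m = l * k" "0 < k"
    and "degree h = l" "lead_coeff h = 1" "coeff h 0 = 0" "h \<noteq> monom 1 l"
  defines "G \<equiv> {g :: 'a poly. degree g = m
      \<and> (\<forall>j. l * m - m < j \<and> \<not> l dvd j \<longrightarrow> coeff (pcompose g h) j = 0)}"
    and "E \<equiv> {s \<in> {1..<k}. \<not> l dvd s}"
  shows "finite G" and "card G \<le> (card (UNIV :: 'a set) - 1) * card (UNIV :: 'a set) ^ (m - card E)"
proof -
  define I where "I = (\<lambda>s. m - s) ` E"
  define K where "K = {..<m} - I"
  have "0 < l"
    using assms(1) prime_CHAR_finite_field[where 'a = 'a] prime_gt_0_nat by metis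
  then have "0 < m" "k \<le> m"
    using assms(2,3) by simp_all
  have "0 < degree (h - monom 1 l)" "degree (h - monom 1 l) < l"
    using degree_diff_monom_gt_0[OF assms(6,7) \<open>0 < l\<close>] degree_diff_monom_less[OF assms(4,5) \<open>0 < l\<close>]
    by simp_all
  then have window: "\<not> l dvd i \<and> l * m - m < l * (i - 1) + degree (h - monom 1 l)
      \<and> \<not> l dvd l * (i - 1) + degree (h - monom 1 l)" if "i \<in> I" for i
    using that reflected_index_bounds[OF assms(2)] unfolding I_def E_def by auto
  have "inj_on (\<lambda>g. (lead_coeff g, restrict (coeff g) K)) G"
  proof (rule inj_onI)
    fix g1 g2 assume g: "g1 \<in> G" "g2 \<in> G"
      "(lead_coeff g1, restrict (coeff g1) K) = (lead_coeff g2, restrict (coeff g2) K)"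
    show "g1 = g2"
    proof (rule outer_eq_if_pcompose_coeffs_eq[OF assms(4,5) \<open>0 < degree (h - monom 1 l)\<close>, where I = I])
      show "of_nat i \<noteq> (0 :: 'a)" if "i \<in> I" for i
        using window[OF that] assms(1) by (simp add: of_nat_eq_0_iff_char_dvd)
      show "coeff g1 i = coeff g2 i" if "i < m" "i \<notin> I" for i
        using g(3) that unfolding K_def by (metis lessThan_iff Diff_iff prod.inject restrict_apply')
    qed (use g window in \<open>auto simp: G_def\<close>)
  qed
  moreover have "0 \<notin> G"
    using \<open>0 < m\<close> unfolding G_def by auto
  moreover have "card K = m - card E"
  proof -
    have "E \<subseteq> {..m}" "(\<lambda>s. m - s) ` E \<subseteq> {..<m}"
      using \<open>k \<le> m\<close> \<open>0 < m\<close> unfolding E_def by auto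
    then show ?thesis
      using card_Diff_image_reflect[of "{..<m}" E m] unfolding K_def I_def by simp
  qed
  ultimately show "finite G" "card G \<le> (card (UNIV :: 'a set) - 1) * card (UNIV :: 'a set) ^ (m - card E)"
    using card_poly_lead_restrict_coeff_le[of K G] unfolding K_def by auto
qed

lemma card_Dne_inter_Dplus_le_CHAR_eq:
  fixes l m k :: nat
  assumes "CHAR('a) = l" "m = l * k" "0 < k"
  shows "real (card (Dne (l * m) l \<inter> Dne (l * m) m \<inter> Dplus (l * m) :: 'a::{finite,field} poly set))
    \<le> real (card (UNIV :: 'a set)) powi (int m + int l - int k + \<lceil>real k / real l\<rceil>)
        * (1 - 1 / real (card (UNIV :: 'a set)))"
proof -
  let ?q = "card (UNIV :: 'a set)"
  let ?S = "Dne (l * m) l \<inter> Dne (l * m) m \<inter> Dplus (l * m) :: 'a poly set"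
  have "prime l"
    using assms(1) prime_CHAR_finite_field[where 'a = 'a] by simp
  then have "0 < l" by (simp add: prime_gt_0_nat)
  then have "0 < m" "k \<le> m"
    using assms(2,3) by simp_all
  define H where "H = {h :: 'a poly. degree h = l \<and> lead_coeff h = 1 \<and> coeff h 0 = 0 \<and> h \<noteq> monom 1 l}"
  define G where "G h = {g :: 'a poly. degree g = m
      \<and> (\<forall>j. l * m - m < j \<and> \<not> l dvd j \<longrightarrow> coeff (pcompose g h) j = 0)}" for h
  define E where "E = {s \<in> {1..<k}. \<not> l dvd s}"
  have decompositions: "?S \<subseteq> (\<lambda>(h, g). pcompose g h) ` Sigma H G"
  proof
    fix f :: "'a poly" assume "f \<in> ?S"
    then have "f \<in> Dne (l * m) l" "f \<in> Dne (m * l) m" "\<not> poly_in_xp l f"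
      using assms(1) by (simp_all add: Dplus_def mult.commute)
    then obtain g h g' h' where gh: "f = pcompose g h" "degree g = l" "degree h = m"
      and gh': "f = pcompose g' h'" "degree g' = m" "lead_coeff h' = 1" "coeff h' 0 = 0" "degree h' = l"
      unfolding mem_Dne_mult[OF \<open>0 < l\<close>] mem_Dne_mult[OF \<open>0 < m\<close>] by blast
    have "h' \<noteq> monom 1 l"
      using \<open>\<not> poly_in_xp l f\<close> poly_in_xp_pcompose_monom[OF \<open>0 < l\<close>] gh'(1) by blast
    then have "h' \<in> H"
      unfolding H_def using gh' by simp
    have "(l - 1) * m = l * m - m"
      by (simp add: diff_mult_distrib)
    then have "coeff f j = 0" if "l * m - m < j" "\<not> l dvd j" for j
      using coeff_pcompose_eq_0_if_CHAR_dvd_degree[of g h j] prime_CHAR_finite_field[where 'a = 'a]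
        assms(1) gh that by simp
    then have "g' \<in> G h'"
      unfolding G_def using gh' by simp
    with \<open>h' \<in> H\<close> show "f \<in> (\<lambda>(h, g). pcompose g h) ` Sigma H G"
      using gh'(1) by force
  qed
  have "H \<subseteq> {h. degree h = l \<and> lead_coeff h = 1 \<and> coeff h 0 = 0}"
    unfolding H_def by auto
  moreover note card_monic_coeff_0_le[of l, where 'a = 'a]
  ultimately have "finite H" "card H \<le> ?q ^ (l - 1)"
    by (auto dest: finite_subset card_mono[rotated])
  have G_finite: "finite (G h)" and G_card: "card (G h) \<le> (?q - 1) * ?q ^ (m - card E)"
    if "h \<in> H" for h
    using card_outer_components_le[OF assms] that unfolding H_def G_def E_def by auto
  have "card ?S \<le> card ((\<lambda>(h, g). pcompose g h) ` Sigma H G)"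
    using decompositions \<open>finite H\<close> G_finite by (intro card_mono finite_imageI finite_SigmaI)
  also have "\<dots> \<le> card H * ((?q - 1) * ?q ^ (m - card E))"
    using \<open>finite H\<close> G_finite G_card by (rule card_image_Sigma_le)
  also have "\<dots> \<le> ?q ^ (l - 1) * ((?q - 1) * ?q ^ (m - card E))"
    using \<open>card H \<le> ?q ^ (l - 1)\<close> by simp
  also have "\<dots> = (?q - 1) * ?q ^ (l - 1 + (m - card E))"
    by (simp add: power_add)
  finally have card_le: "card ?S \<le> (?q - 1) * ?q ^ (l - 1 + (m - card E))" .
  have "k \<le> card E + nat \<lceil>real k / real l\<rceil>"
    unfolding E_def using \<open>0 < l\<close> by (rule card_not_dvd_lower_bound)
  then have "l - 1 + (m - card E) < m + l - k + nat \<lceil>real k / real l\<rceil>"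
    using \<open>0 < l\<close> \<open>k \<le> m\<close> by linarith
  from le_power_mult_one_minus_inverse[OF card_le finite_UNIV_card_ge_0[OF finite_UNIV] this]
  have "real (card ?S) \<le> real ?q ^ (m + l - k + nat \<lceil>real k / real l\<rceil>) * (1 - 1 / real ?q)" .
  moreover have "0 \<le> \<lceil>real k / real l\<rceil>"
    using ceiling_mono[of 0 "real k / real l"] by simp
  then have "int m + int l - int k + \<lceil>real k / real l\<rceil> = int (m + l - k + nat \<lceil>real k / real l\<rceil>)"
    using \<open>k \<le> m\<close> by simp
  ultimately show ?thesis
    by (simp only: power_int_of_nat)
qed

theorem corollary4p19:
  fixes l m n :: nat
  defines "q \<equiv> card (UNIV :: 'a set)"
  defines "p \<equiv> CHAR('a)"
  defines "t \<equiv> card ((Dne n l \<inter> Dne n m \<inter> Dplus n) :: ('a::{finite,field}) poly set)"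
  assumes "prime l" and "l dvd m" and "m > l" and "n = l * m" and "p dvd n"
  shows "(\<not> p dvd l \<longrightarrow>
            real t \<le> real q ^ (m + nat \<lceil>real l / real p\<rceil>) * (1 - 1 / real q))
       \<and> (p dvd l \<longrightarrow>
            (let c = \<lceil>real (m - l + 1) / real l\<rceil> in
              real t \<le> real q powi (int m + int l - c + \<lceil>real_of_int c / real p\<rceil>) * (1 - 1 / real q)
              \<and> (l dvd m \<longrightarrow> c = int (m div l))))"
proof -
  have "prime p" "0 < l" "0 < m"
    using assms(4,6) unfolding p_def by (simp_all add: prime_CHAR_finite_field prime_gt_0_nat)
  have "finite (Dne n l :: 'a poly set)"
    using \<open>0 < l\<close> \<open>0 < m\<close> assms(7) by (intro finite_Dne) simp_all
  then have t_le: "t \<le> card (Dne n l \<inter> Dne n m :: 'a poly set)"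
    unfolding t_def by (intro card_mono) auto
  have coprime_case: "real t \<le> real q ^ (m + nat \<lceil>real l / real p\<rceil>) * (1 - 1 / real q)"
    if "\<not> p dvd l"
  proof -
    have "p dvd m"
      using assms(7,8) \<open>prime p\<close> that by (simp add: prime_dvd_mult_iff)
    then have "real (card (Dne n l \<inter> Dne n m :: 'a poly set))
        \<le> real q ^ (m + nat \<lceil>real l / real p\<rceil>) * (1 - 1 / real q)"
      using card_Dne_inter_le_CHAR_not_dvd[of l m] that assms(6,7) unfolding p_def q_def by simp
    then show ?thesis
      using t_le by (simp add: order_trans)
  qed
  define k where "k = m div l"
  have "m = l * k" "0 < k"
    using assms(5,6) unfolding k_def by auto
  have "p = l" if "p dvd l"
    using assms(4) \<open>prime p\<close> that by (simp add: primes_dvd_imp_eq)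
  then have char_case: "real t \<le> real q powi (int m + int l - int k + \<lceil>real k / real p\<rceil>) * (1 - 1 / real q)"
    if "p dvd l"
    using card_Dne_inter_Dplus_le_CHAR_eq[OF _ \<open>m = l * k\<close> \<open>0 < k\<close>] that assms(7)
    unfolding t_def p_def q_def by simp
  show ?thesis
    using coprime_case char_case ceiling_minus_div_eq[OF \<open>m = l * k\<close> \<open>0 < l\<close> \<open>0 < k\<close>]
    unfolding Let_def k_def by simp
qed

end
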